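(* Let $E\subset[0,1]$ be such that $[0,1]\setminus E$ is finite and let $\alpha>0$. Let $\{\Gamma_j\}_{j\in\mathbb N}$ be the consecutive arrival times of a standard Poisson process and $\{\mathcal R_j\}_{j\in\mathbb N}$ i.i.d. copies of a random closed set $\mathcal R$ in $\mathcal F(E)$, independent of $\{\Gamma_j\}$. Assume that almost surely $\mathcal R_J:=\bigcap_{j\in J}\mathcal R_j=\emptyset$ for all finite $J\subset\mathbb N$ with $|J|$ large enough. For finite $J\subset\mathbb N$ let $\mathcal M_J(A)=\sum_{j\in J}\Gamma_j^{-1/\alpha}$ if $\mathcal R_J\cap A\ne\emptyset$ and $\mathcal M_J(A)=-\infty$ otherwise ($A\subset E$), with $\mathcal M_\emptyset\equiv-\infty$, and let $\mathcal M^{\rm Ca}_{\alpha,\mathcal R}=\sup_{J\subset\mathbb N,|J|<\infty}\mathcal M_J$. For $t\in E$ let $\mathcal J_t=\{\ell\in\mathbb N: t\in\mathcal R_\ell\}$ and $\xi_\alpha(t)=\sum_{j\in\mathcal J_t}\Gamma_j^{-1/\alpha}$ if $\mathcal J_t\ne\emptyset$, $\xi_\alpha(t)=-\infty$ otherwise. Then almost surely $\mathcal M^{\rm Ca}_{\alpha,\mathcal R}(A)=\sup_{t\in A}\xi_\alpha(t)$ for the sets $A\subset E$, i.e. $\mathcal M^{\rm Ca}_{\alpha,\mathcal R}$ equals the sup-integral of $\xi_\alpha$ as sup-measures on $E$.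
   Context: $\mathcal F(E)$ is the space of closed subsets of $E$ with the Fell topology. A sup-measure on $E$ is a map $m$ from subsets of $E$ to $[-\infty,\infty]$ with $m(\bigcup_\lambda A_\lambda)=\sup_\lambda m(A_\lambda)$ and $m(\emptyset)=-\infty$. The supremum over finite $J$ is understood pointwise, as the increasing limit of maxima over $J\subset\{1,\dots,\ell\}$ as $\ell\to\infty$. *)

theory Defs
  imports "HOL-Probability.Probability"
begin

definition closed_subsets :: "real set \<Rightarrow> real set set" where
  "closed_subsets E = {F. F \<subseteq> E \<and> closedin (top_of_set E) F}"

definition fell_topology :: "real set \<Rightarrow> real set topology" where
  "fell_topology E = topology_generated_by
     ({{F \<in> closed_subsets E. F \<inter> K = {}} | K. compact K \<and> K \<subseteq> E} \<union>
      {{F \<in> closed_subsets E. F \<inter> G \<noteq> {}} | G. openin (top_of_set E) G})"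

definition fell_measure :: "real set \<Rightarrow> real set measure" where
  "fell_measure E = sigma (closed_subsets E) {U. openin (fell_topology E) U}"

text \<open>Gamma j are the consecutive arrival times of a standard (unit rate) Poisson
  process: partial sums of i.i.d. standard exponential interarrival times.
  Indices start at 0 (paper: at 1).\<close>
definition poisson_arrival_times :: "'w measure \<Rightarrow> (nat \<Rightarrow> 'w \<Rightarrow> real) \<Rightarrow> bool" where
  "poisson_arrival_times M Gam \<longleftrightarrow>
     (\<exists>X :: nat \<Rightarrow> 'w \<Rightarrow> real.
        prob_space.indep_vars M (\<lambda>_. borel) X UNIV \<and>
        (\<forall>i. distributed M lborel (X i) (exponential_density 1)) \<and>
        (\<forall>j \<omega>. Gam j \<omega> = (\<Sum>i\<le>j. X i \<omega>)))"

definition iid_random_closed_sets :: "'w measure \<Rightarrow> real set \<Rightarrow> (nat \<Rightarrow> 'w \<Rightarrow> real set) \<Rightarrow> bool" where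
  "iid_random_closed_sets M E R \<longleftrightarrow>
     (\<forall>i. R i \<in> measurable M (fell_measure E)) \<and>
     prob_space.indep_vars M (\<lambda>_. fell_measure E) R UNIV \<and>
     (\<forall>i. distr M (fell_measure E) (R i) = distr M (fell_measure E) (R 0))"

text \<open>The sequence (R_j) is independent of the sequence (Gamma_j): the sigma-algebras
  generated by the two sequences (as random elements of the product spaces) are independent
  (this is the library's indep_var, which requires equal value types, unfolded via indep_var_eq).\<close>
definition indep_sequences :: "'w measure \<Rightarrow> real set \<Rightarrow> (nat \<Rightarrow> 'w \<Rightarrow> real set)
                                \<Rightarrow> (nat \<Rightarrow> 'w \<Rightarrow> real) \<Rightarrow> bool" where
  "indep_sequences M E R Gam \<longleftrightarrow>
     (\<lambda>\<omega> i. R i \<omega>) \<in> measurable M (PiM UNIV (\<lambda>_. fell_measure E)) \<and>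
     (\<lambda>\<omega> i. Gam i \<omega>) \<in> measurable M (PiM UNIV (\<lambda>_. borel)) \<and>
     prob_space.indep_set M
       (sigma_sets (space M) {(\<lambda>\<omega> i. R i \<omega>) -` A \<inter> space M | A. A \<in> sets (PiM UNIV (\<lambda>_. fell_measure E))})
       (sigma_sets (space M) {(\<lambda>\<omega> i. Gam i \<omega>) -` A \<inter> space M | A. A \<in> sets (PiM UNIV (\<lambda>_. (borel :: real measure)))})"

definition M_J :: "real \<Rightarrow> (nat \<Rightarrow> 'w \<Rightarrow> real) \<Rightarrow> (nat \<Rightarrow> 'w \<Rightarrow> real set) \<Rightarrow> 'w
                    \<Rightarrow> nat set \<Rightarrow> real set \<Rightarrow> ereal" where
  "M_J \<alpha> Gam R \<omega> J A =
     (if J \<noteq> {} \<and> (\<Inter>j\<in>J. R j \<omega>) \<inter> A \<noteq> {}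
      then ereal (\<Sum>j\<in>J. Gam j \<omega> powr (-1/\<alpha>)) else -\<infinity>)"

definition M_Ca :: "real \<Rightarrow> (nat \<Rightarrow> 'w \<Rightarrow> real) \<Rightarrow> (nat \<Rightarrow> 'w \<Rightarrow> real set) \<Rightarrow> 'w
                    \<Rightarrow> real set \<Rightarrow> ereal" where
  "M_Ca \<alpha> Gam R \<omega> A = (SUP J\<in>{J. finite J}. M_J \<alpha> Gam R \<omega> J A)"

definition xi :: "real \<Rightarrow> (nat \<Rightarrow> 'w \<Rightarrow> real) \<Rightarrow> (nat \<Rightarrow> 'w \<Rightarrow> real set) \<Rightarrow> 'w
                  \<Rightarrow> real \<Rightarrow> ereal" where
  "xi \<alpha> Gam R \<omega> t =
     (let Jt = {l. t \<in> R l \<omega>} in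
      if Jt \<noteq> {} then ereal (\<Sum>j\<in>Jt. Gam j \<omega> powr (-1/\<alpha>)) else -\<infinity>)"

end

theory Submission
  imports Defs
begin

text \<open>The identity holds pathwise. On the almost sure event where only boundedly many
  R_j can share a point, every J_t is finite. Each M_J(A) with a point t in R_J \<inter> A
  is then at most \<xi>(t), because J \<subseteq> J_t and the weights Gamma_j^(-1/\<alpha>) are
  nonnegative, while \<xi>(t) = M_{J_t}(A) is itself one of the terms of the supremum.\<close>

lemma finite_indices_containing_if_bounded_overlap:
  fixes S :: "'i \<Rightarrow> 'a set"
  assumes "\<forall>J. finite J \<and> card J \<ge> n \<longrightarrow> (\<Inter>j\<in>J. S j) = {}"
  shows "finite {i. t \<in> S i}"
proof (rule ccontr)
  assume "infinite {i. t \<in> S i}"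
  then obtain J where J: "J \<subseteq> {i. t \<in> S i}" "finite J" "card J = n"
    using infinite_arbitrarily_large by blast
  then have "t \<in> (\<Inter>j\<in>J. S j)" by auto
  with assms J show False by auto
qed

lemma xi_eq_M_J_indices_containing:
  assumes "t \<in> A" and "{l. t \<in> R l \<omega>} \<noteq> {}"
  shows "xi \<alpha> Gam R \<omega> t = M_J \<alpha> Gam R \<omega> {l. t \<in> R l \<omega>} A"
  using assms unfolding xi_def M_J_def Let_def by auto

lemma M_J_le_xi:
  assumes "finite {l. t \<in> R l \<omega>}" and "t \<in> (\<Inter>j\<in>J. R j \<omega>)"
  shows "M_J \<alpha> Gam R \<omega> J A \<le> xi \<alpha> Gam R \<omega> t"
proof (cases "J = {} \<or> (\<Inter>j\<in>J. R j \<omega>) \<inter> A = {}")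
  case True
  then show ?thesis unfolding M_J_def by auto
next
  case False
  have J_sub: "J \<subseteq> {l. t \<in> R l \<omega>}" using assms(2) by auto
  with False have "{l. t \<in> R l \<omega>} \<noteq> {}" by auto
  moreover have "(\<Sum>j\<in>J. Gam j \<omega> powr (-1/\<alpha>)) \<le> (\<Sum>j\<in>{l. t \<in> R l \<omega>}. Gam j \<omega> powr (-1/\<alpha>))"
    by (rule sum_mono2[OF assms(1) J_sub]) simp
  ultimately show ?thesis
    using False unfolding M_J_def xi_def Let_def by simp
qed

lemma M_Ca_eq_SUP_xi:
  assumes fin: "\<And>t. finite {l. t \<in> R l \<omega>}"
  shows "M_Ca \<alpha> Gam R \<omega> A = (SUP t\<in>A. xi \<alpha> Gam R \<omega> t)"
proof (rule antisym)
  show "M_Ca \<alpha> Gam R \<omega> A \<le> (SUP t\<in>A. xi \<alpha> Gam R \<omega> t)"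
    unfolding M_Ca_def
  proof (rule SUP_least)
    fix J :: "nat set"
    show "M_J \<alpha> Gam R \<omega> J A \<le> (SUP t\<in>A. xi \<alpha> Gam R \<omega> t)"
    proof (cases "J \<noteq> {} \<and> (\<Inter>j\<in>J. R j \<omega>) \<inter> A \<noteq> {}")
      case True
      then obtain t where t: "t \<in> A" "t \<in> (\<Inter>j\<in>J. R j \<omega>)" by blast
      from fin[of t] t(2) have "M_J \<alpha> Gam R \<omega> J A \<le> xi \<alpha> Gam R \<omega> t"
        by (rule M_J_le_xi)
      also have "\<dots> \<le> (SUP t\<in>A. xi \<alpha> Gam R \<omega> t)" using t(1) by (rule SUP_upper)
      finally show ?thesis .
    next
      case False
      then show ?thesis unfolding M_J_def by auto
    qed
  qed
next
  show "(SUP t\<in>A. xi \<alpha> Gam R \<omega> t) \<le> M_Ca \<alpha> Gam R \<omega> A"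
  proof (rule SUP_least)
    fix t assume "t \<in> A"
    show "xi \<alpha> Gam R \<omega> t \<le> M_Ca \<alpha> Gam R \<omega> A"
    proof (cases "{l. t \<in> R l \<omega>} = {}")
      case True
      then show ?thesis unfolding xi_def Let_def by simp
    next
      case False
      with \<open>t \<in> A\<close> have "xi \<alpha> Gam R \<omega> t = M_J \<alpha> Gam R \<omega> {l. t \<in> R l \<omega>} A"
        by (rule xi_eq_M_J_indices_containing)
      also have "\<dots> \<le> M_Ca \<alpha> Gam R \<omega> A"
        unfolding M_Ca_def by (rule SUP_upper) (simp add: fin)
      finally show ?thesis .
    qed
  qed
qed

theorem proposition2p3:
  fixes M :: "'w measure" and E :: "real set" and \<alpha> :: real
    and Gam :: "nat \<Rightarrow> 'w \<Rightarrow> real" and R :: "nat \<Rightarrow> 'w \<Rightarrow> real set"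
  assumes "prob_space M"
    and "E \<subseteq> {0..1}" and "finite ({0..1} - E)"
    and "\<alpha> > 0"
    and "poisson_arrival_times M Gam"
    and "iid_random_closed_sets M E R"
    and "indep_sequences M E R Gam"
    and "AE \<omega> in M. \<exists>n. \<forall>J. finite J \<and> card J \<ge> n \<longrightarrow> (\<Inter>j\<in>J. R j \<omega>) = {}"
  shows "AE \<omega> in M. \<forall>A. A \<subseteq> E \<longrightarrow>
           M_Ca \<alpha> Gam R \<omega> A = (SUP t\<in>A. xi \<alpha> Gam R \<omega> t)"
  using assms(8)
proof eventually_elim
  case (elim \<omega>)
  then obtain n where "\<forall>J. finite J \<and> card J \<ge> n \<longrightarrow> (\<Inter>j\<in>J. R j \<omega>) = {}" by blast
  then have "\<And>t. finite {l. t \<in> R l \<omega>}"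
    by (rule finite_indices_containing_if_bounded_overlap)
  then show ?case by (simp add: M_Ca_eq_SUP_xi)
qed

end
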